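(* Let $J\subseteq\mathbb R$ be an open interval and $A:J\to\mathbb R$ of class $C^1$. For every three-tuple $\mathbf z=(z_1,z_2,z_3)$ of distinct points on $\Gamma=\{x+iA(x):x\in J\}$, with $z_j=x_j+iA(x_j)$, one has $$\mathtt S[\mathrm{Re}K_\Gamma](\mathbf z)=2\sum_{\substack{j=1\\k<l}}^3\frac{1}{s^2(x_j)\ell_k^2\ell_l^2}\Bigl[A'(x_j)(x_j-x_k)-\bigl(A(x_j)-A(x_k)\bigr)\Bigr]\Bigl[A'(x_j)(x_j-x_l)-\bigl(A(x_j)-A(x_l)\bigr)\Bigr],$$ $$\mathtt S[\mathrm{Im}K_\Gamma](\mathbf z)=2\sum_{\substack{j=1\\k<l}}^3\frac{1}{s^2(x_j)\ell_k^2\ell_l^2}\Bigl[(x_k-x_j)+A'(x_j)\bigl(A(x_k)-A(x_j)\bigr)\Bigr]\Bigl[(x_l-x_j)+A'(x_j)\bigl(A(x_l)-A(x_j)\bigr)\Bigr].$$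
   Context: In the sums, for each $j\in\{1,2,3\}$ the indices $k<l$ are the two elements of $\{1,2,3\}\setminus\{j\}$. Notation: $s^2(x)=1+(A'(x))^2$, and $\ell_j^2=(x_l-x_k)^2+(A(x_l)-A(x_k))^2$ whenever $\{j,k,l\}=\{1,2,3\}$. The kernel (normalizing factor $1/(2\pi)$ omitted) is $K_\Gamma(w,z)=\dfrac{A'(x)-i}{s(x)\,[\,x-y+i(A(x)-A(y))\,]}$ for $w=x+iA(x)$, $z=y+iA(y)$, $x\neq y$, with real and imaginary parts $\mathrm{Re}K_\Gamma$, $\mathrm{Im}K_\Gamma$. For a real-valued $K$ and distinct $z_1,z_2,z_3$, $\mathtt S[K](\mathbf z)=\sum_{\sigma\in S_3}K(z_{\sigma(1)},z_{\sigma(2)})K(z_{\sigma(1)},z_{\sigma(3)})$. *)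

theory Defs
  imports "HOL-Analysis.Analysis"
begin

definition s2 :: "(real \<Rightarrow> real) \<Rightarrow> real \<Rightarrow> real" where
  "s2 A x = 1 + (deriv A x)\<^sup>2"

text \<open>The kernel K_Gamma(w,z) (normalizing 1/(2 pi) omitted), for w = x + i A(x),
  z = y + i A(y) on the graph Gamma; x = Re w, y = Re z.\<close>
definition KGamma :: "(real \<Rightarrow> real) \<Rightarrow> complex \<Rightarrow> complex \<Rightarrow> complex" where
  "KGamma A w z = (let x = Re w; y = Re z in
      (complex_of_real (deriv A x) - \<i>) /
      (complex_of_real (sqrt (s2 A x)) * (complex_of_real (x - y) + \<i> * complex_of_real (A x - A y))))"

definition Ssym :: "(complex \<Rightarrow> complex \<Rightarrow> real) \<Rightarrow> (nat \<Rightarrow> complex) \<Rightarrow> real" where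
  "Ssym K z = (\<Sum>\<sigma>\<in>{\<sigma>. \<sigma> permutes {1,2,3::nat}}. K (z (\<sigma> 1)) (z (\<sigma> 2)) * K (z (\<sigma> 1)) (z (\<sigma> 3)))"

text \<open>For j in {1,2,3}: k = oth1 j < l = oth2 j are the two other indices.\<close>
definition oth1 :: "nat \<Rightarrow> nat" where "oth1 j = (if j = 1 then 2 else 1)"
definition oth2 :: "nat \<Rightarrow> nat" where "oth2 j = (if j = 3 then 2 else 3)"

definition ell2 :: "(real \<Rightarrow> real) \<Rightarrow> (nat \<Rightarrow> real) \<Rightarrow> nat \<Rightarrow> real" where
  "ell2 A x j = (x (oth2 j) - x (oth1 j))\<^sup>2 + (A (x (oth2 j)) - A (x (oth1 j)))\<^sup>2"

end

theory Submission
  imports Defs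
begin

text \<open>Multiplying numerator and denominator of K(z_j, z_k) by the conjugate of
  (x_j - x_k) + i (A(x_j) - A(x_k)) shows that its real and imaginary parts are the two
  bracketed numerators divided by s(x_j) times the squared chord |z_j - z_k|^2. The factor
  s appears squared because both kernels in each term of S share their first argument, and
  the six permutations pair up into the three terms j = \<sigma>(1), each counted twice.\<close>

definition graph_dist2 :: "(real \<Rightarrow> real) \<Rightarrow> real \<Rightarrow> real \<Rightarrow> real" where
  "graph_dist2 A a b = (a - b)\<^sup>2 + (A a - A b)\<^sup>2"

lemma divide_of_real_mult:
  "z / (complex_of_real s * w) = z / w / complex_of_real s"
  by (simp add: mult.commute)

lemma Re_real_minus_i_divide:
  "Re ((complex_of_real a - \<i>) / (complex_of_real s * (complex_of_real p + \<i> * complex_of_real q)))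
     = (a * p - q) / (s * (p\<^sup>2 + q\<^sup>2))"
  unfolding divide_of_real_mult Re_divide_of_real by (simp add: Re_divide mult.commute)

lemma Im_real_minus_i_divide:
  "Im ((complex_of_real a - \<i>) / (complex_of_real s * (complex_of_real p + \<i> * complex_of_real q)))
     = (- p - a * q) / (s * (p\<^sup>2 + q\<^sup>2))"
  unfolding divide_of_real_mult Im_divide_of_real by (simp add: Im_divide mult.commute)

lemma Re_KGamma_graph:
  "Re (KGamma A (Complex a (A a)) (Complex b (A b))) =
     (deriv A a * (a - b) - (A a - A b)) / (sqrt (s2 A a) * graph_dist2 A a b)"
  unfolding KGamma_def Let_def complex.sel Re_real_minus_i_divide graph_dist2_def ..

lemma Im_KGamma_graph:
  "Im (KGamma A (Complex a (A a)) (Complex b (A b))) =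
     ((b - a) + deriv A a * (A b - A a)) / (sqrt (s2 A a) * graph_dist2 A a b)"
  unfolding KGamma_def Let_def complex.sel Im_real_minus_i_divide graph_dist2_def
  by (simp add: algebra_simps)

lemma s2_nonneg: "0 \<le> s2 A a"
  by (simp add: s2_def)

lemma divide_sqrt_mult_divide_sqrt:
  fixes S :: real
  assumes "0 \<le> S"
  shows "u / (sqrt S * c) * (v / (sqrt S * d)) = 1 / (S * d * c) * u * v"
proof -
  have "sqrt S * sqrt S = S" using assms by simp
  then show ?thesis by (simp add: field_simps)
qed

lemma Re_KGamma_graph_mult:
  "Re (KGamma A (Complex a (A a)) (Complex b (A b))) * Re (KGamma A (Complex a (A a)) (Complex c (A c)))
   = 1 / (s2 A a * graph_dist2 A a c * graph_dist2 A a b) *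
     (deriv A a * (a - b) - (A a - A b)) * (deriv A a * (a - c) - (A a - A c))"
  unfolding Re_KGamma_graph by (rule divide_sqrt_mult_divide_sqrt[OF s2_nonneg])

lemma Im_KGamma_graph_mult:
  "Im (KGamma A (Complex a (A a)) (Complex b (A b))) * Im (KGamma A (Complex a (A a)) (Complex c (A c)))
   = 1 / (s2 A a * graph_dist2 A a c * graph_dist2 A a b) *
     ((b - a) + deriv A a * (A b - A a)) * ((c - a) + deriv A a * (A c - A a))"
  unfolding Im_KGamma_graph by (rule divide_sqrt_mult_divide_sqrt[OF s2_nonneg])

lemma Ssym_eq_sum_oth:
  "Ssym K z = 2 * (\<Sum>j\<in>{1,2,3}. K (z j) (z (oth1 j)) * K (z j) (z (oth2 j)))"
proof -
  have "Ssym K z = K (z 1) (z 2) * K (z 1) (z 3) + K (z 1) (z 3) * K (z 1) (z 2)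
      + K (z 2) (z 1) * K (z 2) (z 3) + K (z 2) (z 3) * K (z 2) (z 1)
      + K (z 3) (z 1) * K (z 3) (z 2) + K (z 3) (z 2) * K (z 3) (z 1)"
    by (simp add: Ssym_def sum_over_permutations_insert transpose_def)
  then show ?thesis by (simp add: oth1_def oth2_def)
qed

lemma ell2_oth1:
  "j \<in> {1,2,3} \<Longrightarrow> ell2 A x (oth1 j) = graph_dist2 A (x j) (x (oth2 j))"
  by (auto simp: ell2_def oth1_def oth2_def graph_dist2_def power2_commute)

lemma ell2_oth2:
  "j \<in> {1,2,3} \<Longrightarrow> ell2 A x (oth2 j) = graph_dist2 A (x j) (x (oth1 j))"
  by (auto simp: ell2_def oth1_def oth2_def graph_dist2_def power2_commute)

theorem lemma2p1:
  fixes J :: "real set" and A :: "real \<Rightarrow> real" and x :: "nat \<Rightarrow> real"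
  assumes "open J" and "is_interval J" and "J \<noteq> {}"
    and "\<forall>t\<in>J. A differentiable (at t)" and "continuous_on J (deriv A)"
    and "\<forall>j\<in>{1,2,3}. x j \<in> J"
    and "x 1 \<noteq> x 2" and "x 1 \<noteq> x 3" and "x 2 \<noteq> x 3"
  defines "z \<equiv> \<lambda>j. Complex (x j) (A (x j))"
  shows "(Ssym (\<lambda>w v. Re (KGamma A w v)) z =
           2 * (\<Sum>j\<in>{1,2,3}. (let k = oth1 j; l = oth2 j in
              1 / (s2 A (x j) * ell2 A x k * ell2 A x l) *
              (deriv A (x j) * (x j - x k) - (A (x j) - A (x k))) *
              (deriv A (x j) * (x j - x l) - (A (x j) - A (x l)))))) \<and>
         (Ssym (\<lambda>w v. Im (KGamma A w v)) z =
           2 * (\<Sum>j\<in>{1,2,3}. (let k = oth1 j; l = oth2 j in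
              1 / (s2 A (x j) * ell2 A x k * ell2 A x l) *
              ((x k - x j) + deriv A (x j) * (A (x k) - A (x j))) *
              ((x l - x j) + deriv A (x j) * (A (x l) - A (x j))))))"
  unfolding Ssym_eq_sum_oth z_def
  by (intro conjI arg_cong[where f = "(*) 2"] sum.cong)
    (simp_all add: Let_def ell2_oth1 ell2_oth2 Re_KGamma_graph_mult Im_KGamma_graph_mult)

end
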